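(* Let $a,b\in\mathbb R$ and $s,t\in\mathbb N$. The system $\ddot x_1=a\,\dot x_1^{2-t}\dot x_2^{t}$, $\ddot x_2=b\,\dot x_1^{2-s}\dot x_2^{s}$ on $\mathbb R^2$ (spray $S=y_1\frac{\partial}{\partial x_1}+y_2\frac{\partial}{\partial x_2}+a y_1^{2-t}y_2^t\frac{\partial}{\partial y_1}+b y_1^{2-s}y_2^s\frac{\partial}{\partial y_2}$, considered where defined, e.g. on $y_1\ne0$, $y_2\neq 0$) cannot be the geodesic system of a non-Berwald Landsberg metric: there is no open set $U$ on which the Berwald curvature $\mathcal R$ of $S$ is not identically zero together with a function $E:U\to\mathbb R$ satisfying (H), (EL), (Ls) with $(g_{ij})$ positive definite.
   Context: Coordinates $(x^1,x^2,y^1,y^2)=(x_1,x_2,y_1,y_2)$ on $T\mathbb R^2$. For a spray $S=y^i\frac{\partial}{\partial x^i}+f^i\frac{\partial}{\partial y^i}$: $\Gamma^i_j=-\frac12\frac{\partial f^i}{\partial y^j}$, $\Gamma^i_{jk}=\frac{\partial\Gamma^i_j}{\partial y^k}$; Berwald curvature $\mathcal R=-\frac12\frac{\partial^3f^l}{\partial y^i\partial y^j\partial y^k}dx^i\otimes dx^j\otimes dx^k\otimes\frac{\partial}{\partial y^l}$ (a Landsberg metric is of Berwald type iff $\mathcal R=0$). For $E$ smooth, $g_{ij}=\frac{\partial^2E}{\partial y^i\partial y^j}$; (H) $y^i\frac{\partial E}{\partial y^i}-2E=0$; (EL) $y^j\frac{\partial^2E}{\partial x^j\partial y^i}+f^j\frac{\partial^2E}{\partial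 y^j\partial y^i}-\frac{\partial E}{\partial x^i}=0$; (Ls) $\frac{\partial g_{jk}}{\partial x^i}-\Gamma^l_i\frac{\partial g_{jk}}{\partial y^l}-\Gamma^l_{ik}g_{lj}-\Gamma^l_{ij}g_{lk}=0$. *)

theory Defs
  imports "HOL-Analysis.Analysis"
begin

text \<open>Points of T R^2 are quadruples p = (x1, x2, y1, y2).\<close>
type_synonym pt = "real \<times> real \<times> real \<times> real"

definition xc :: "nat \<Rightarrow> pt \<Rightarrow> real" where
  "xc i p = (if i = 1 then fst p else fst (snd p))"

definition yc :: "nat \<Rightarrow> pt \<Rightarrow> real" where
  "yc i p = (if i = 1 then fst (snd (snd p)) else snd (snd (snd p)))"

definition Xd :: "nat \<Rightarrow> pt" where
  "Xd i = (if i = 1 then (1,0,0,0) else (0,1,0,0))"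

definition Yd :: "nat \<Rightarrow> pt" where
  "Yd i = (if i = 1 then (0,0,1,0) else (0,0,0,1))"

definition pd :: "pt \<Rightarrow> (pt \<Rightarrow> real) \<Rightarrow> pt \<Rightarrow> real" where
  "pd v F p = deriv (\<lambda>h. F (p + h *\<^sub>R v)) 0"

fun iter_pd :: "pt list \<Rightarrow> (pt \<Rightarrow> real) \<Rightarrow> pt \<Rightarrow> real" where
  "iter_pd [] F = F"
| "iter_pd (v # vs) F = pd v (iter_pd vs F)"

definition smooth_on :: "pt set \<Rightarrow> (pt \<Rightarrow> real) \<Rightarrow> bool" where
  "smooth_on U F \<longleftrightarrow>
     (\<forall>vs. set vs \<subseteq> Basis \<longrightarrow>
        continuous_on U (iter_pd vs F) \<and>
        (\<forall>p\<in>U. \<forall>v\<in>Basis. (\<lambda>h. iter_pd vs F (p + h *\<^sub>R v)) differentiable (at (0::real))))"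

definition fsp :: "real \<Rightarrow> real \<Rightarrow> nat \<Rightarrow> nat \<Rightarrow> nat \<Rightarrow> pt \<Rightarrow> real" where
  "fsp a b s t i p =
     (if i = 1 then a * yc 1 p powi (2 - int t) * yc 2 p powi (int t)
      else b * yc 1 p powi (2 - int s) * yc 2 p powi (int s))"

definition Gam1 :: "(nat \<Rightarrow> pt \<Rightarrow> real) \<Rightarrow> nat \<Rightarrow> nat \<Rightarrow> pt \<Rightarrow> real" where
  "Gam1 f i j p = - (1/2) * pd (Yd j) (f i) p"

definition Gam2 :: "(nat \<Rightarrow> pt \<Rightarrow> real) \<Rightarrow> nat \<Rightarrow> nat \<Rightarrow> nat \<Rightarrow> pt \<Rightarrow> real" where
  "Gam2 f i j k p = pd (Yd k) (Gam1 f i j) p"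

definition Berwald :: "(nat \<Rightarrow> pt \<Rightarrow> real) \<Rightarrow> nat \<Rightarrow> nat \<Rightarrow> nat \<Rightarrow> nat \<Rightarrow> pt \<Rightarrow> real" where
  "Berwald f i j k l p = - (1/2) * pd (Yd i) (pd (Yd j) (pd (Yd k) (f l))) p"

definition gmet :: "(pt \<Rightarrow> real) \<Rightarrow> nat \<Rightarrow> nat \<Rightarrow> pt \<Rightarrow> real" where
  "gmet E i j p = pd (Yd i) (pd (Yd j) E) p"

definition cond_H :: "pt set \<Rightarrow> (pt \<Rightarrow> real) \<Rightarrow> bool" where
  "cond_H U E \<longleftrightarrow> (\<forall>p\<in>U. (\<Sum>i\<in>{1,2::nat}. yc i p * pd (Yd i) E p) - 2 * E p = 0)"

definition cond_EL :: "pt set \<Rightarrow> (nat \<Rightarrow> pt \<Rightarrow> real) \<Rightarrow> (pt \<Rightarrow> real) \<Rightarrow> bool" where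
  "cond_EL U f E \<longleftrightarrow> (\<forall>p\<in>U. \<forall>i\<in>{1,2::nat}.
      (\<Sum>j\<in>{1,2::nat}. yc j p * pd (Xd j) (pd (Yd i) E) p)
    + (\<Sum>j\<in>{1,2::nat}. f j p * pd (Yd j) (pd (Yd i) E) p)
    - pd (Xd i) E p = 0)"

definition cond_Ls :: "pt set \<Rightarrow> (nat \<Rightarrow> pt \<Rightarrow> real) \<Rightarrow> (pt \<Rightarrow> real) \<Rightarrow> bool" where
  "cond_Ls U f E \<longleftrightarrow> (\<forall>p\<in>U. \<forall>i\<in>{1,2::nat}. \<forall>j\<in>{1,2::nat}. \<forall>k\<in>{1,2::nat}.
      pd (Xd i) (gmet E j k) p
    - (\<Sum>l\<in>{1,2::nat}. Gam1 f l i p * pd (Yd l) (gmet E j k) p)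
    - (\<Sum>l\<in>{1,2::nat}. Gam2 f l i k p * gmet E l j p)
    - (\<Sum>l\<in>{1,2::nat}. Gam2 f l i j p * gmet E l k p) = 0)"

definition pos_def_g :: "pt set \<Rightarrow> (pt \<Rightarrow> real) \<Rightarrow> bool" where
  "pos_def_g U E \<longleftrightarrow> (\<forall>p\<in>U. \<forall>v :: nat \<Rightarrow> real. (v 1, v 2) \<noteq> (0, 0) \<longrightarrow>
      (\<Sum>i\<in>{1,2::nat}. \<Sum>j\<in>{1,2::nat}. gmet E i j p * v i * v j) > 0)"

end

theory Submission
  imports Defs
begin

(* By (H), E is 2-homogeneous in y, so its first and second y-derivatives are homogeneous of
   degrees 1 and 0. Contracting (Ls) twice with y shows that E is horizontally constant,
   dE/dx^i = Gamma^l_i dE/dy^l, and differentiating the once contracted equation in y and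
   comparing with (Ls) gives (dE/dy^l) d^2 Gamma^l_2/(dy^2)^2 = 0. For this spray that is
     c_t y1^(2-t) y2^(t-3) dE/dy^1 + c_s y1^(2-s) y2^(s-3) dE/dy^2 = 0,
   with c_n = -(coefficient) n (n-1) (n-2) / 2; c_t and c_s are not both zero because R is not.
   If one of them vanishes or s = t, this is a relation alpha dE/dy^1 + beta dE/dy^2 = 0 with
   constant (alpha, beta) <> 0, and its y-derivative says g (alpha, beta) = 0, contradicting
   positive definiteness. Otherwise dE/dy^1 = rho dE/dy^2 for a monomial rho; differentiating
   this and the horizontal constancy of E in y yields two monomial identities that together
   force y1 rho + y2 = 0, whereas 2 E = (y1 rho + y2) dE/dy^2 > 0. *)

section \<open>Partial derivatives along coordinate directions\<close>

definition has_pd :: "pt \<Rightarrow> (pt \<Rightarrow> real) \<Rightarrow> pt \<Rightarrow> real \<Rightarrow> bool" where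
  "has_pd v F q D \<longleftrightarrow> ((\<lambda>h. F (q + h *\<^sub>R v)) has_field_derivative D) (at 0)"

lemma pd_eqI: "has_pd v F q D \<Longrightarrow> pd v F q = D"
  unfolding has_pd_def pd_def by (rule DERIV_imp_deriv)

lemma has_pd_const: "has_pd v (\<lambda>r. c) q 0"
  unfolding has_pd_def by simp

lemma has_pd_add:
  "has_pd v F q D1 \<Longrightarrow> has_pd v G q D2 \<Longrightarrow> has_pd v (\<lambda>r. F r + G r) q (D1 + D2)"
  unfolding has_pd_def by (rule DERIV_add)

lemma has_pd_diff:
  "has_pd v F q D1 \<Longrightarrow> has_pd v G q D2 \<Longrightarrow> has_pd v (\<lambda>r. F r - G r) q (D1 - D2)"
  unfolding has_pd_def by (rule DERIV_diff)

lemma has_pd_mult: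
  "has_pd v F q D1 \<Longrightarrow> has_pd v G q D2 \<Longrightarrow> has_pd v (\<lambda>r. F r * G r) q (D1 * G q + F q * D2)"
  unfolding has_pd_def using DERIV_mult[of "\<lambda>h. F (q + h *\<^sub>R v)" D1 0 UNIV "\<lambda>h. G (q + h *\<^sub>R v)" D2]
  by (simp add: mult.commute)

lemma eventually_line_in_open:
  fixes q v :: pt
  assumes "open U" "q \<in> U"
  shows "eventually (\<lambda>h. q + h *\<^sub>R v \<in> U) (nhds (0::real))"
proof -
  have "open ((\<lambda>h::real. q + h *\<^sub>R v) -` U)"
    by (intro open_vimage assms continuous_intros)
  then show ?thesis
    unfolding eventually_nhds using assms(2) by (intro exI[of _ "(\<lambda>h. q + h *\<^sub>R v) -` U"]) auto
qed

lemma has_pd_vanishing_on_open: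
  assumes "open U" "q \<in> U" "\<forall>r\<in>U. F r = 0" "has_pd v F q D"
  shows "D = 0"
proof -
  have vanish: "eventually (\<lambda>h. F (q + h *\<^sub>R v) = 0) (nhds 0)"
    using eventually_line_in_open[OF assms(1,2), of v] assms(3) by (auto elim: eventually_mono)
  have "((\<lambda>h. 0) has_field_derivative D) (at 0)"
    using assms(4) DERIV_cong_ev[OF refl vanish refl] unfolding has_pd_def by blast
  then show ?thesis
    using DERIV_const DERIV_unique by blast
qed

lemma pd_cong_open:
  assumes "open U" "q \<in> U" "\<forall>r\<in>U. F r = G r"
  shows "pd v F q = pd v G q"
proof -
  have "eventually (\<lambda>h. F (q + h *\<^sub>R v) = G (q + h *\<^sub>R v)) (nhds 0)"
    using eventually_line_in_open[OF assms(1,2), of v] assms(3) by (auto elim: eventually_mono)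
  then show ?thesis
    unfolding pd_def by (rule deriv_cong_ev[OF _ refl])
qed

lemma has_pd_identityE:
  assumes "open U" "q \<in> U" "\<forall>r\<in>U. F r = G r" "has_pd v F q DF" "has_pd v G q DG"
    and "DF = DG \<Longrightarrow> P"
  shows P
proof -
  have "has_pd v (\<lambda>r. F r - G r) q (DF - DG)"
    using assms(4,5) by (rule has_pd_diff)
  moreover have "\<forall>r\<in>U. F r - G r = 0"
    using assms(3) by simp
  ultimately have "DF - DG = 0"
    by (intro has_pd_vanishing_on_open[OF assms(1,2)])
  then show P
    using assms(6) by simp
qed

lemma has_pd_along_line:
  assumes "has_pd w G (c + \<sigma> *\<^sub>R w) D"
  shows "((\<lambda>\<tau>. G (c + \<tau> *\<^sub>R w)) has_field_derivative D) (at \<sigma>)"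
proof -
  have "((\<lambda>h. G ((c + \<sigma> *\<^sub>R w) + h *\<^sub>R w)) has_field_derivative D) (at (\<sigma> + - \<sigma>))"
    using assms unfolding has_pd_def by simp
  then have "((\<lambda>\<tau>. G ((c + \<sigma> *\<^sub>R w) + (\<tau> + - \<sigma>) *\<^sub>R w)) has_field_derivative D) (at \<sigma>)"
    by (subst (asm) DERIV_shift)
  then show ?thesis
    by (simp add: algebra_simps)
qed

lemma Xd_in_Basis [simp]: "Xd i \<in> Basis"
  by (auto simp: Xd_def Basis_prod_def zero_prod_def)

lemma Yd_in_Basis [simp]: "Yd i \<in> Basis"
  by (auto simp: Yd_def Basis_prod_def zero_prod_def)

lemma iter_pd_append: "iter_pd (ws @ vs) F = iter_pd ws (iter_pd vs F)"
  by (induction ws) auto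

lemma smooth_on_pd:
  assumes "smooth_on U F" "v \<in> Basis"
  shows "smooth_on U (pd v F)"
  unfolding smooth_on_def
proof (intro allI impI)
  fix vs :: "pt list"
  assume "set vs \<subseteq> Basis"
  then show "continuous_on U (iter_pd vs (pd v F)) \<and>
      (\<forall>p\<in>U. \<forall>w\<in>Basis. (\<lambda>h. iter_pd vs (pd v F) (p + h *\<^sub>R w)) differentiable at 0)"
    using assms(1)[unfolded smooth_on_def, rule_format, of "vs @ [v]"] assms(2)
    by (simp add: iter_pd_append)
qed

lemma smooth_on_imp_continuous_on: "smooth_on U F \<Longrightarrow> continuous_on U F"
  unfolding smooth_on_def by (metis empty_subsetI iter_pd.simps(1) list.set(1))

lemma smooth_on_has_pd: "smooth_on U F \<Longrightarrow> q \<in> U \<Longrightarrow> v \<in> Basis \<Longrightarrow> has_pd v F q (pd v F q)"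
  unfolding smooth_on_def has_pd_def pd_def
  by (metis DERIV_deriv_iff_real_differentiable empty_subsetI iter_pd.simps(1) list.set(1))

lemma second_difference_mean_value:
  fixes F :: "pt \<Rightarrow> real"
  assumes sm: "smooth_on U F" and u: "u \<in> Basis" and v: "v \<in> Basis" and h: "h > 0"
    and near: "\<And>r. dist r q \<le> 2 * h \<Longrightarrow> r \<in> U"
  shows "\<exists>r. dist r q \<le> 2 * h \<and>
     F (q + h *\<^sub>R v + h *\<^sub>R u) - F (q + h *\<^sub>R u) - F (q + h *\<^sub>R v) + F q
       = h * h * pd v (pd u F) r"
proof -
  have in_square: "q + \<alpha> *\<^sub>R u + \<beta> *\<^sub>R v \<in> U \<and> dist (q + \<alpha> *\<^sub>R u + \<beta> *\<^sub>R v) q \<le> 2 * h"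
    if "0 \<le> \<alpha>" "\<alpha> \<le> h" "0 \<le> \<beta>" "\<beta> \<le> h" for \<alpha> \<beta>
  proof -
    have "dist (q + \<alpha> *\<^sub>R u + \<beta> *\<^sub>R v) q \<le> norm (\<alpha> *\<^sub>R u) + norm (\<beta> *\<^sub>R v)"
      by (simp add: dist_norm norm_triangle_ineq del: norm_scaleR)
    also have "\<dots> = \<alpha> + \<beta>"
      using that u v by simp
    finally show ?thesis
      using that near by simp
  qed
  define \<phi> where "\<phi> \<sigma> = F ((q + h *\<^sub>R v) + \<sigma> *\<^sub>R u) - F (q + \<sigma> *\<^sub>R u)" for \<sigma>
  have "\<exists>\<xi>>0. \<xi> < h \<and> \<phi> h - \<phi> 0 = (h - 0) *
          (pd u F ((q + h *\<^sub>R v) + \<xi> *\<^sub>R u) - pd u F (q + \<xi> *\<^sub>R u))"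
  proof (rule MVT2[OF h])
    fix \<sigma> assume "0 \<le> \<sigma>" "\<sigma> \<le> h"
    then have "(q + h *\<^sub>R v) + \<sigma> *\<^sub>R u \<in> U" "q + \<sigma> *\<^sub>R u \<in> U"
      using in_square[of \<sigma> h] in_square[of \<sigma> 0] h by (simp_all add: algebra_simps)
    then show "(\<phi> has_real_derivative
        (\<lambda>\<xi>. pd u F ((q + h *\<^sub>R v) + \<xi> *\<^sub>R u) - pd u F (q + \<xi> *\<^sub>R u)) \<sigma>) (at \<sigma>)"
      unfolding \<phi>_def by (intro DERIV_diff has_pd_along_line smooth_on_has_pd[OF sm _ u])
  qed
  then obtain \<xi> where \<xi>: "0 < \<xi>" "\<xi> < h" and
    \<phi>_diff: "\<phi> h - \<phi> 0 = h * (pd u F ((q + h *\<^sub>R v) + \<xi> *\<^sub>R u) - pd u F (q + \<xi> *\<^sub>R u))"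
    by auto
  define \<psi> where "\<psi> \<tau> = pd u F ((q + \<xi> *\<^sub>R u) + \<tau> *\<^sub>R v)" for \<tau>
  have "\<exists>\<eta>>0. \<eta> < h \<and> \<psi> h - \<psi> 0 = (h - 0) * pd v (pd u F) ((q + \<xi> *\<^sub>R u) + \<eta> *\<^sub>R v)"
  proof (rule MVT2[OF h])
    fix \<tau> assume "0 \<le> \<tau>" "\<tau> \<le> h"
    then have "(q + \<xi> *\<^sub>R u) + \<tau> *\<^sub>R v \<in> U"
      using in_square[of \<xi> \<tau>] \<xi> by simp
    then show "(\<psi> has_real_derivative (\<lambda>\<eta>. pd v (pd u F) ((q + \<xi> *\<^sub>R u) + \<eta> *\<^sub>R v)) \<tau>) (at \<tau>)"
      unfolding \<psi>_def by (intro has_pd_along_line smooth_on_has_pd[OF smooth_on_pd[OF sm u] _ v])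
  qed
  then obtain \<eta> where \<eta>: "0 < \<eta>" "\<eta> < h" and
    \<psi>_diff: "\<psi> h - \<psi> 0 = h * pd v (pd u F) ((q + \<xi> *\<^sub>R u) + \<eta> *\<^sub>R v)"
    by auto
  have "\<phi> h - \<phi> 0 = h * (\<psi> h - \<psi> 0)"
    unfolding \<phi>_diff \<psi>_def by (simp add: algebra_simps)
  then have "F (q + h *\<^sub>R v + h *\<^sub>R u) - F (q + h *\<^sub>R u) - F (q + h *\<^sub>R v) + F q
      = h * h * pd v (pd u F) ((q + \<xi> *\<^sub>R u) + \<eta> *\<^sub>R v)"
    unfolding \<psi>_diff by (simp add: \<phi>_def)
  moreover have "dist ((q + \<xi> *\<^sub>R u) + \<eta> *\<^sub>R v) q \<le> 2 * h"
    using in_square[of \<xi> \<eta>] \<xi> \<eta> by simp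
  ultimately show ?thesis
    by blast
qed

lemma pd_commute:
  fixes F :: "pt \<Rightarrow> real"
  assumes U: "open U" and sm: "smooth_on U F" and q: "q \<in> U" and u: "u \<in> Basis" and v: "v \<in> Basis"
  shows "pd u (pd v F) q = pd v (pd u F) q"
proof (rule ccontr)
  let ?A = "pd v (pd u F)" and ?B = "pd u (pd v F)"
  assume "?B q \<noteq> ?A q"
  then have e: "\<bar>?A q - ?B q\<bar> / 2 > 0" by simp
  have "isCont ?A q" "isCont ?B q"
    using smooth_on_imp_continuous_on[OF smooth_on_pd[OF smooth_on_pd[OF sm]]] u v U q
    by (simp_all add: continuous_on_eq_continuous_at)
  then obtain d1 d2 where
    d1: "d1 > 0" "\<And>r. dist r q < d1 \<Longrightarrow> dist (?A r) (?A q) < \<bar>?A q - ?B q\<bar> / 2" and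
    d2: "d2 > 0" "\<And>r. dist r q < d2 \<Longrightarrow> dist (?B r) (?B q) < \<bar>?A q - ?B q\<bar> / 2"
    using e unfolding continuous_at_eps_delta by metis
  obtain d3 where d3: "d3 > 0" "ball q d3 \<subseteq> U"
    using U q open_contains_ball by blast
  define h where "h = min d1 (min d2 d3) / 3"
  have h: "h > 0" "2 * h < d1" "2 * h < d2" "2 * h < d3"
    using d1 d2 d3 by (auto simp: h_def)
  have near: "r \<in> U" if "dist r q \<le> 2 * h" for r
    using d3 h that by (auto simp: dist_commute)
  obtain r1 where r1: "dist r1 q \<le> 2 * h"
    "F (q + h *\<^sub>R v + h *\<^sub>R u) - F (q + h *\<^sub>R u) - F (q + h *\<^sub>R v) + F q = h * h * ?A r1"
    using second_difference_mean_value[OF sm u v h(1) near] by blast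
  obtain r2 where r2: "dist r2 q \<le> 2 * h"
    "F (q + h *\<^sub>R u + h *\<^sub>R v) - F (q + h *\<^sub>R v) - F (q + h *\<^sub>R u) + F q = h * h * ?B r2"
    using second_difference_mean_value[OF sm v u h(1) near] by blast
  have swap: "q + h *\<^sub>R u + h *\<^sub>R v = q + h *\<^sub>R v + h *\<^sub>R u"
    by (simp add: algebra_simps)
  have "h * h * ?A r1 = h * h * ?B r2"
    using r1(2) r2(2) unfolding swap by linarith
  then have "?A r1 = ?B r2"
    using h(1) by simp
  moreover have "dist (?A r1) (?A q) < \<bar>?A q - ?B q\<bar> / 2" "dist (?B r2) (?B q) < \<bar>?A q - ?B q\<bar> / 2"
    using d1(2)[of r1] d2(2)[of r2] r1(1) r2(1) h by simp_all
  ultimately show False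
    by (simp add: dist_real_def abs_if split: if_split_asm)
qed

section \<open>Monomials in the fibre coordinates\<close>

lemma yc_add_scaleR: "yc i (q + h *\<^sub>R v) = yc i q + h * yc i v"
  by (cases q; cases v) (auto simp: yc_def)

lemma yc_Yd [simp]: "yc i (Yd j) = (if (i = 1) = (j = 1) then 1 else 0)"
  by (auto simp: yc_def Yd_def)

lemma yc_Xd [simp]: "yc i (Xd j) = 0"
  by (auto simp: yc_def Xd_def)

lemma has_pd_yc: "has_pd v (yc i) q (yc i v)"
  unfolding has_pd_def yc_add_scaleR by (auto intro!: derivative_eq_intros)

definition Omega :: "pt set" where
  "Omega = {q. yc 1 q \<noteq> 0 \<and> yc 2 q \<noteq> 0}"

lemma open_Omega: "open Omega"
proof -
  have "continuous_on UNIV (yc i)" for i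
    unfolding yc_def[abs_def] by (cases "i = 1") (auto intro!: continuous_intros)
  then show ?thesis
    unfolding Omega_def by (intro open_Collect_conj open_Collect_neq continuous_on_const)
qed

type_synonym monom = "real \<times> int \<times> int"

fun monom_val :: "monom \<Rightarrow> real \<Rightarrow> real \<Rightarrow> real" where
  "monom_val (c, m, n) x y = c * x powi m * y powi n"

definition monom_at :: "monom \<Rightarrow> pt \<Rightarrow> real" where
  "monom_at M q = monom_val M (yc 1 q) (yc 2 q)"

fun monom_dy :: "nat \<Rightarrow> monom \<Rightarrow> monom" where
  "monom_dy i (c, m, n) = (if i = 1 then (c * of_int m, m - 1, n) else (c * of_int n, m, n - 1))"

fun monom_scale :: "real \<Rightarrow> monom \<Rightarrow> monom" where
  "monom_scale d (c, m, n) = (d * c, m, n)"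

fun monom_degree :: "monom \<Rightarrow> int" where
  "monom_degree (c, m, n) = m + n"

lemma monom_at_scale [simp]: "monom_at (monom_scale d M) q = d * monom_at M q"
  by (cases M) (simp add: monom_at_def)

lemma monom_dy_scale [simp]: "monom_dy i (monom_scale d M) = monom_scale d (monom_dy i M)"
  by (cases M) auto

lemma monom_at_eq_0_iff: "q \<in> Omega \<Longrightarrow> monom_at M q = 0 \<longleftrightarrow> fst M = 0"
  by (cases M) (auto simp: monom_at_def Omega_def)

lemma has_pd_monom_at_Xd: "has_pd (Xd i) (monom_at M) q 0"
  by (cases M) (simp add: has_pd_def monom_at_def yc_add_scaleR)

lemma has_pd_monom_at_Yd:
  assumes "q \<in> Omega"
  shows "has_pd (Yd i) (monom_at M) q (monom_at (monom_dy i M) q)"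
proof -
  obtain c m n where M: "M = (c, m, n)"
    by (cases M) auto
  have "yc 1 q \<noteq> 0" "yc 2 q \<noteq> 0"
    using assms by (auto simp: Omega_def)
  then have "((\<lambda>h. c * (yc 1 q + h) powi m * yc 2 q powi n) has_field_derivative
             c * (of_int m * (yc 1 q + 0) powi (m - 1) * 1) * yc 2 q powi n) (at 0)"
        "((\<lambda>h. c * yc 1 q powi m * (yc 2 q + h) powi n) has_field_derivative
             c * yc 1 q powi m * (of_int n * (yc 2 q + 0) powi (n - 1) * 1)) (at 0)"
    by (auto intro!: derivative_eq_intros)
  then show ?thesis
    unfolding has_pd_def monom_at_def M by (simp add: yc_add_scaleR mult_ac)
qed

lemma pd_monom_at_Yd: "q \<in> Omega \<Longrightarrow> pd (Yd i) (monom_at M) q = monom_at (monom_dy i M) q"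
  by (rule pd_eqI[OF has_pd_monom_at_Yd])

lemma pd_Yd_eq_monom_at:
  assumes "\<forall>r\<in>Omega. F r = monom_at M r" "q \<in> Omega"
  shows "pd (Yd i) F q = monom_at (monom_dy i M) q"
  using pd_cong_open[OF open_Omega assms(2,1)] pd_monom_at_Yd[OF assms(2)] by simp

lemma monom_euler:
  assumes "q \<in> Omega"
  shows "yc 1 q * monom_at (monom_dy 1 M) q + yc 2 q * monom_at (monom_dy 2 M) q
    = of_int (monom_degree M) * monom_at M q"
proof -
  obtain c m n where M: "M = (c, m, n)"
    by (cases M) auto
  have "z * z powi (e - 1) = z powi e" if "z \<noteq> 0" for z :: real and e
    using power_int_add[of z "e - 1" 1] that by (simp add: mult.commute)
  moreover have "yc 1 q \<noteq> 0" "yc 2 q \<noteq> 0"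
    using assms by (auto simp: Omega_def)
  ultimately show ?thesis
    unfolding M monom_at_def by (simp add: algebra_simps mult.left_commute[of "yc _ q"])
qed

section \<open>The spray\<close>

definition spray_monom :: "real \<Rightarrow> real \<Rightarrow> nat \<Rightarrow> nat \<Rightarrow> nat \<Rightarrow> monom" where
  "spray_monom a b s t l = (if l = 1 then (a, 2 - int t, int t) else (b, 2 - int s, int s))"

lemma fsp_eq_monom_at: "fsp a b s t l = monom_at (spray_monom a b s t l)"
  by (rule ext) (simp add: fsp_def spray_monom_def monom_at_def)

definition conn_monom :: "real \<Rightarrow> real \<Rightarrow> nat \<Rightarrow> nat \<Rightarrow> nat \<Rightarrow> nat \<Rightarrow> monom" where
  "conn_monom a b s t l i = monom_scale (- 1/2) (monom_dy i (spray_monom a b s t l))"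

lemma Gam1_eq_monom_at:
  "q \<in> Omega \<Longrightarrow> Gam1 (fsp a b s t) l i q = monom_at (conn_monom a b s t l i) q"
  unfolding Gam1_def conn_monom_def fsp_eq_monom_at by (simp add: pd_monom_at_Yd)

lemma Gam2_eq_monom_at:
  "q \<in> Omega \<Longrightarrow> Gam2 (fsp a b s t) l i k q = monom_at (monom_dy k (conn_monom a b s t l i)) q"
  unfolding Gam2_def by (rule pd_Yd_eq_monom_at) (auto simp: Gam1_eq_monom_at)

lemma conn_monom_euler:
  assumes "q \<in> Omega"
  shows "yc 1 q * monom_at (monom_dy 1 (conn_monom a b s t l i)) q
       + yc 2 q * monom_at (monom_dy 2 (conn_monom a b s t l i)) q = monom_at (conn_monom a b s t l i) q"
proof -
  have "monom_degree (conn_monom a b s t l i) = 1"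
    by (simp add: conn_monom_def spray_monom_def)
  then show ?thesis
    using monom_euler[OF assms] by simp
qed

definition berwald_coeff :: "real \<Rightarrow> nat \<Rightarrow> real" where
  "berwald_coeff c n = - c * real n * (real n - 1) * (real n - 2) / 2"

lemma conn_monom_dy22:
  "monom_dy 2 (monom_dy 2 (conn_monom a b s t l 2)) =
     (if l = 1 then (berwald_coeff a t, 2 - int t, int t - 3) else (berwald_coeff b s, 2 - int s, int s - 3))"
  by (simp add: conn_monom_def spray_monom_def berwald_coeff_def algebra_simps)

lemma Berwald_eq_monom_at:
  assumes "q \<in> Omega"
  shows "Berwald (fsp a b s t) i j k l q
    = - (1/2) * monom_at (monom_dy i (monom_dy j (monom_dy k (spray_monom a b s t l)))) q"
proof -
  have "\<forall>r\<in>Omega. pd (Yd k) (fsp a b s t l) r = monom_at (monom_dy k (spray_monom a b s t l)) r"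
    by (simp add: fsp_eq_monom_at pd_monom_at_Yd)
  then have "\<forall>r\<in>Omega. pd (Yd j) (pd (Yd k) (fsp a b s t l)) r
      = monom_at (monom_dy j (monom_dy k (spray_monom a b s t l))) r"
    using pd_Yd_eq_monom_at by blast
  then show ?thesis
    unfolding Berwald_def using pd_Yd_eq_monom_at[OF _ assms] by simp
qed

text \<open>If both coefficients vanish, the spray coefficients are quadratic polynomials in \<open>y\<close>.\<close>
lemma Berwald_eq_0_if_berwald_coeff_eq_0:
  assumes "berwald_coeff a t = 0" "berwald_coeff b s = 0" "q \<in> Omega"
  shows "Berwald (fsp a b s t) i j k l q = 0"
proof -
  have "a = 0 \<or> t \<in> {0, 1, 2}" "b = 0 \<or> s \<in> {0, 1, 2}"
    using assms(1,2) by (auto simp: berwald_coeff_def)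
  then have "fst (monom_dy i (monom_dy j (monom_dy k (spray_monom a b s t l)))) = 0"
    by (auto simp: spray_monom_def)
  then show ?thesis
    using assms(3) by (simp add: Berwald_eq_monom_at monom_at_eq_0_iff)
qed

section \<open>Consequences of (H), (Ls) and positive definiteness\<close>

locale landsberg_energy =
  fixes a b :: real and s t :: nat and U :: "pt set" and E :: "pt \<Rightarrow> real"
  assumes open_U: "open U" and U_Omega: "U \<subseteq> Omega" and smooth: "smooth_on U E"
    and homogeneous: "cond_H U E" and landsberg: "cond_Ls U (fsp a b s t) E"
    and pos_def: "pos_def_g U E"
begin

abbreviation conn :: "nat \<Rightarrow> nat \<Rightarrow> pt \<Rightarrow> real" where
  "conn l i \<equiv> monom_at (conn_monom a b s t l i)"

abbreviation conn_dy :: "nat \<Rightarrow> nat \<Rightarrow> nat \<Rightarrow> pt \<Rightarrow> real" where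
  "conn_dy k l i \<equiv> monom_at (monom_dy k (conn_monom a b s t l i))"

lemma in_Omega: "q \<in> U \<Longrightarrow> q \<in> Omega"
  using U_Omega by auto

lemma has_pd_E: "q \<in> U \<Longrightarrow> v \<in> Basis \<Longrightarrow> has_pd v E q (pd v E q)"
  using smooth_on_has_pd[OF smooth] .

lemma has_pd_pd_E: "q \<in> U \<Longrightarrow> v \<in> Basis \<Longrightarrow> w \<in> Basis \<Longrightarrow> has_pd v (pd w E) q (pd v (pd w E) q)"
  using smooth_on_has_pd[OF smooth_on_pd[OF smooth]] .

lemma has_pd_pd_pd_E: "q \<in> U \<Longrightarrow> v \<in> Basis \<Longrightarrow> w \<in> Basis \<Longrightarrow> w' \<in> Basis \<Longrightarrow>
    has_pd v (pd w (pd w' E)) q (pd v (pd w (pd w' E)) q)"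
  using smooth_on_has_pd[OF smooth_on_pd[OF smooth_on_pd[OF smooth]]] .

lemmas has_pd_rules = has_pd_add has_pd_diff has_pd_mult has_pd_const has_pd_yc
  has_pd_monom_at_Xd has_pd_monom_at_Yd has_pd_E has_pd_pd_E has_pd_pd_pd_E Xd_in_Basis Yd_in_Basis

lemmas differentiate = has_pd_identityE[OF open_U]

lemma pd_E_commute: "q \<in> U \<Longrightarrow> u \<in> Basis \<Longrightarrow> v \<in> Basis \<Longrightarrow> pd u (pd v E) q = pd v (pd u E) q"
  using pd_commute[OF open_U smooth] by blast

lemma pd_pd_E_commute: "q \<in> U \<Longrightarrow> u \<in> Basis \<Longrightarrow> v \<in> Basis \<Longrightarrow> w \<in> Basis \<Longrightarrow>
    pd u (pd v (pd w E)) q = pd v (pd u (pd w E)) q"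
  using pd_commute[OF open_U smooth_on_pd[OF smooth]] by blast

lemma euler_E: "\<forall>r\<in>U. yc 1 r * pd (Yd 1) E r + yc 2 r * pd (Yd 2) E r = 2 * E r"
  using homogeneous unfolding cond_H_def by simp

lemma euler_E_y:
  assumes "k \<in> {1,2}"
  shows "\<forall>r\<in>U. yc 1 r * pd (Yd k) (pd (Yd 1) E) r + yc 2 r * pd (Yd k) (pd (Yd 2) E) r = pd (Yd k) E r"
proof
  fix r assume r: "r \<in> U"
  show "yc 1 r * pd (Yd k) (pd (Yd 1) E) r + yc 2 r * pd (Yd k) (pd (Yd 2) E) r = pd (Yd k) E r"
    by (rule differentiate[OF r euler_E, where v = "Yd k"], (rule has_pd_rules r)+) (use assms in auto)
qed

lemma euler_E_x:
  assumes q: "q \<in> U"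
  shows "yc 1 q * pd (Xd i) (pd (Yd 1) E) q + yc 2 q * pd (Xd i) (pd (Yd 2) E) q = 2 * pd (Xd i) E q"
  by (rule differentiate[OF q euler_E, where v = "Xd i"], (rule has_pd_rules q)+) auto

lemma euler_E_xy:
  assumes q: "q \<in> U" and j: "j \<in> {1,2}"
  shows "yc 1 q * pd (Xd i) (pd (Yd j) (pd (Yd 1) E)) q + yc 2 q * pd (Xd i) (pd (Yd j) (pd (Yd 2) E)) q
    = pd (Xd i) (pd (Yd j) E) q"
  by (rule differentiate[OF q euler_E_y[OF j], where v = "Xd i"], (rule has_pd_rules q)+) auto

lemma euler_E_yy:
  assumes q: "q \<in> U" and j: "j \<in> {1,2}" and l: "l \<in> {1,2}"
  shows "yc 1 q * pd (Yd l) (pd (Yd j) (pd (Yd 1) E)) q + yc 2 q * pd (Yd l) (pd (Yd j) (pd (Yd 2) E)) q = 0"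
  by (rule differentiate[OF q euler_E_y[OF j], where v = "Yd l"], (rule has_pd_rules q)+)
    (use j l pd_E_commute[OF q] in auto)

lemma landsberg_eq:
  assumes q: "q \<in> U" and ijk: "i \<in> {1,2}" "j \<in> {1,2}" "k \<in> {1,2}"
  shows "pd (Xd i) (pd (Yd j) (pd (Yd k) E)) q
    = conn 1 i q * pd (Yd 1) (pd (Yd j) (pd (Yd k) E)) q + conn 2 i q * pd (Yd 2) (pd (Yd j) (pd (Yd k) E)) q
    + conn_dy k 1 i q * pd (Yd 1) (pd (Yd j) E) q + conn_dy k 2 i q * pd (Yd 2) (pd (Yd j) E) q
    + conn_dy j 1 i q * pd (Yd 1) (pd (Yd k) E) q + conn_dy j 2 i q * pd (Yd 2) (pd (Yd k) E) q"
proof -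
  have "pd (Xd i) (gmet E j k) q
    - (\<Sum>l\<in>{1,2::nat}. Gam1 (fsp a b s t) l i q * pd (Yd l) (gmet E j k) q)
    - (\<Sum>l\<in>{1,2::nat}. Gam2 (fsp a b s t) l i k q * gmet E l j q)
    - (\<Sum>l\<in>{1,2::nat}. Gam2 (fsp a b s t) l i j q * gmet E l k q) = 0"
    using landsberg q ijk unfolding cond_Ls_def by blast
  moreover have "gmet E = (\<lambda>i j. pd (Yd i) (pd (Yd j) E))"
    by (intro ext) (simp add: gmet_def)
  ultimately show ?thesis
    using in_Omega[OF q] by (simp add: Gam1_eq_monom_at Gam2_eq_monom_at)
qed

lemma landsberg_eq_contracted:
  assumes q: "q \<in> U" and ij: "i \<in> {1,2}" "j \<in> {1,2}"
  shows "pd (Xd i) (pd (Yd j) E) q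
    = conn 1 i q * pd (Yd 1) (pd (Yd j) E) q + conn 2 i q * pd (Yd 2) (pd (Yd j) E) q
    + conn_dy j 1 i q * pd (Yd 1) E q + conn_dy j 2 i q * pd (Yd 2) E q"
proof -
  note Ls = landsberg_eq[OF q ij, of 1] landsberg_eq[OF q ij, of 2]
  note homogeneity = euler_E_xy[OF q ij(2), of i] euler_E_yy[OF q ij(2), of 1] euler_E_yy[OF q ij(2), of 2]
    euler_E_y[of 1, rule_format, OF _ q] euler_E_y[of 2, rule_format, OF _ q]
    conn_monom_euler[OF in_Omega[OF q], of a b s t 1 i] conn_monom_euler[OF in_Omega[OF q], of a b s t 2 i]
  show ?thesis
    using Ls homogeneity by simp algebra
qed

text \<open>Contracting (Ls) twice with \<open>y\<close>: \<open>E\<close> is constant along horizontal directions.\<close>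
lemma horizontal_E:
  assumes q: "q \<in> U" and i: "i \<in> {1,2}"
  shows "pd (Xd i) E q = conn 1 i q * pd (Yd 1) E q + conn 2 i q * pd (Yd 2) E q"
proof -
  note Ls = landsberg_eq_contracted[OF q i, of 1] landsberg_eq_contracted[OF q i, of 2]
  note homogeneity = euler_E_x[OF q, of i]
    euler_E_y[of 1, rule_format, OF _ q] euler_E_y[of 2, rule_format, OF _ q] euler_E[rule_format, OF q]
    conn_monom_euler[OF in_Omega[OF q], of a b s t 1 i] conn_monom_euler[OF in_Omega[OF q], of a b s t 2 i]
  show ?thesis
    using Ls homogeneity by simp algebra
qed

lemma berwald_contracted:
  assumes q: "q \<in> U"
  shows "monom_at (monom_dy 2 (monom_dy 2 (conn_monom a b s t 1 2))) q * pd (Yd 1) E q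
       + monom_at (monom_dy 2 (monom_dy 2 (conn_monom a b s t 2 2))) q * pd (Yd 2) E q = 0"
proof -
  txt \<open>The \<open>y\<^sup>2\<close>-derivative of the contracted equation differs from (Ls) by exactly this term.\<close>
  have contracted_22: "\<forall>r\<in>U. pd (Xd 2) (pd (Yd 2) E) r
    = conn 1 2 r * pd (Yd 1) (pd (Yd 2) E) r + conn 2 2 r * pd (Yd 2) (pd (Yd 2) E) r
    + conn_dy 2 1 2 r * pd (Yd 1) E r + conn_dy 2 2 2 r * pd (Yd 2) E r"
    using landsberg_eq_contracted by simp
  show ?thesis
    by (rule differentiate[OF q contracted_22, where v = "Yd 2"], (rule has_pd_rules q in_Omega[OF q])+)
      (use landsberg_eq[OF q, of 2 2 2] pd_pd_E_commute[OF q Yd_in_Basis Xd_in_Basis Yd_in_Basis, of 2 2 2]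
        pd_pd_E_commute[OF q Yd_in_Basis Yd_in_Basis Yd_in_Basis, of 2 1 2]
        pd_E_commute[OF q Yd_in_Basis Yd_in_Basis, of 2 1] in simp)
qed

lemma landsberg_relation:
  assumes "q \<in> U"
  shows "monom_at (berwald_coeff a t, 2 - int t, int t - 3) q * pd (Yd 1) E q
       + monom_at (berwald_coeff b s, 2 - int s, int s - 3) q * pd (Yd 2) E q = 0"
  using berwald_contracted[OF assms] by (simp add: conn_monom_dy22)

lemma metric_positive:
  assumes q: "q \<in> U" and nonzero: "(\<alpha>, \<beta>) \<noteq> (0, 0)"
  shows "\<alpha> * (\<alpha> * pd (Yd 1) (pd (Yd 1) E) q + \<beta> * pd (Yd 1) (pd (Yd 2) E) q)
       + \<beta> * (\<alpha> * pd (Yd 2) (pd (Yd 1) E) q + \<beta> * pd (Yd 2) (pd (Yd 2) E) q) > 0"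
proof -
  let ?v = "\<lambda>i::nat. if i = 1 then \<alpha> else \<beta>"
  have "\<forall>v. (v 1, v 2) \<noteq> (0, 0) \<longrightarrow> 0 < (\<Sum>i\<in>{1,2::nat}. \<Sum>j\<in>{1,2::nat}. gmet E i j q * v i * v j)"
    using pos_def q unfolding pos_def_g_def by blast
  from this[rule_format, of ?v] nonzero show ?thesis
    by (simp add: gmet_def algebra_simps)
qed

lemma no_constant_relation:
  assumes q: "q \<in> U" and nonzero: "(\<alpha>, \<beta>) \<noteq> (0, 0)"
  shows "\<not> (\<forall>r\<in>U. \<alpha> * pd (Yd 1) E r + \<beta> * pd (Yd 2) E r = 0)"
proof
  assume relation: "\<forall>r\<in>U. \<alpha> * pd (Yd 1) E r + \<beta> * pd (Yd 2) E r = 0"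
  have "\<alpha> * pd (Yd k) (pd (Yd 1) E) q + \<beta> * pd (Yd k) (pd (Yd 2) E) q = 0" for k
    by (rule differentiate[OF q relation, where v = "Yd k"], (rule has_pd_rules q)+) simp
  then show False
    using metric_positive[OF q nonzero] by simp
qed

lemma E_pos:
  assumes q: "q \<in> U"
  shows "E q > 0"
proof -
  have "(yc 1 q, yc 2 q) \<noteq> (0, 0)"
    using in_Omega[OF q] by (auto simp: Omega_def)
  from metric_positive[OF q this] show ?thesis
    using euler_E_y[of 1] euler_E_y[of 2] euler_E q by auto
qed

lemma proportional_case_impossible:
  assumes q: "q \<in> U" and nonzero: "(berwald_coeff a t, berwald_coeff b s) \<noteq> (0, 0)"
    and proportional: "berwald_coeff a t = 0 \<or> berwald_coeff b s = 0 \<or> s = t"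
  shows False
proof -
  have "berwald_coeff a t * pd (Yd 1) E r + berwald_coeff b s * pd (Yd 2) E r = 0" if r: "r \<in> U" for r
  proof -
    let ?\<mu>\<^sub>t = "monom_at (1, 2 - int t, int t - 3) r" and ?\<mu>\<^sub>s = "monom_at (1, 2 - int s, int s - 3) r"
    have relation: "?\<mu>\<^sub>t * (berwald_coeff a t * pd (Yd 1) E r) + ?\<mu>\<^sub>s * (berwald_coeff b s * pd (Yd 2) E r) = 0"
      using landsberg_relation[OF r] by (simp add: monom_at_def mult_ac)
    have "?\<mu>\<^sub>t \<noteq> 0" "?\<mu>\<^sub>s \<noteq> 0"
      using in_Omega[OF r] by (simp_all add: monom_at_eq_0_iff)
    with relation proportional show ?thesis
      by (auto simp flip: distrib_left)
  qed
  then show False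
    using no_constant_relation[OF q nonzero] by blast
qed

end

section \<open>Non-proportional Landsberg coefficients\<close>

definition ratio_monom :: "real \<Rightarrow> nat \<Rightarrow> nat \<Rightarrow> monom" where
  "ratio_monom k s t = (- k, int t - int s, int s - int t)"

text \<open>With \<open>\<rho>\<close> given by \<open>R\<close> and \<open>\<Lambda>\<^sub>i = \<Gamma>\<^sup>1\<^sub>i \<rho> + \<Gamma>\<^sup>2\<^sub>i\<close>, this is
  \<open>\<partial>\<^sub>1\<Lambda>\<^sub>i - \<rho> \<partial>\<^sub>2\<Lambda>\<^sub>i + \<Lambda>\<^sub>i \<partial>\<^sub>2\<rho>\<close> (derivatives in \<open>y\<close>): the obstruction to
  \<open>\<partial>E/\<partial>y\<^sup>1 = \<rho> \<partial>E/\<partial>y\<^sup>2\<close> being compatible with \<open>\<partial>E/\<partial>x\<^sup>i = \<Gamma>\<^sup>l\<^sub>i \<partial>E/\<partial>y\<^sup>l\<close>.\<close>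
definition obstruction :: "real \<Rightarrow> real \<Rightarrow> nat \<Rightarrow> nat \<Rightarrow> monom \<Rightarrow> nat \<Rightarrow> real \<Rightarrow> real \<Rightarrow> real" where
  "obstruction a b s t R i x y =
     monom_val (monom_dy 1 (conn_monom a b s t 1 i)) x y * monom_val R x y
   + monom_val (conn_monom a b s t 1 i) x y * monom_val (monom_dy 1 R) x y
   + monom_val (monom_dy 1 (conn_monom a b s t 2 i)) x y
   + monom_val (conn_monom a b s t 2 i) x y * monom_val (monom_dy 2 R) x y
   - monom_val R x y * monom_val R x y * monom_val (monom_dy 2 (conn_monom a b s t 1 i)) x y
   - monom_val R x y * monom_val (monom_dy 2 (conn_monom a b s t 2 i)) x y"

lemma obstruction_1_ratio:
  assumes "x \<noteq> 0" "y \<noteq> 0"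
  shows "obstruction a b s t (ratio_monom k s t) 1 x y
    = ((a * k * (2 - real t) - b * (2 - real s)) / 2) * (y ^ s / x ^ s)
      * ((1 - real s) + k * real t * (x * x ^ t * y ^ s / (y * x ^ s * y ^ t)))"
  unfolding obstruction_def ratio_monom_def conn_monom_def spray_monom_def using assms
  by (simp add: power_int_diff power_int_add power_int_minus) (simp add: field_simps)

lemma obstruction_2_ratio:
  assumes "x \<noteq> 0" "y \<noteq> 0"
  shows "obstruction a b s t (ratio_monom k s t) 2 x y
    = ((a * k * real t - b * real s) / 2) * (x * y ^ s / (x ^ s * y))
      * ((2 - real s) + k * (real t - 1) * (x * x ^ t * y ^ s / (y * x ^ s * y ^ t)))"
  unfolding obstruction_def ratio_monom_def conn_monom_def spray_monom_def using assms
  by (simp add: power_int_diff power_int_add power_int_minus) (simp add: field_simps, algebra)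

lemma euler_ratio:
  assumes "x \<noteq> 0" "y \<noteq> 0"
  shows "x * monom_val (ratio_monom k s t) x y + y = y * (1 - k * (x * x ^ t * y ^ s / (y * x ^ s * y ^ t)))"
  unfolding ratio_monom_def using assms
  by (simp add: power_int_diff power_int_add power_int_minus) (simp add: field_simps)

lemma ratio_coeffs_nondegenerate:
  assumes "berwald_coeff a t \<noteq> 0" "berwald_coeff b s \<noteq> 0" "s \<noteq> t"
    and k: "k * berwald_coeff a t = berwald_coeff b s"
  shows "a * k * (2 - real t) - b * (2 - real s) \<noteq> 0" "a * k * real t - b * real s \<noteq> 0"
proof -
  have "a \<noteq> 0" "b \<noteq> 0" "real t \<ge> 3" "real s \<ge> 3"
    using assms(1,2) by (auto simp: berwald_coeff_def dest!: not_le_imp_less simp: less_Suc_eq numeral_3_eq_3)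
  moreover have "real s \<noteq> real t"
    using assms(3) by simp
  moreover have "a * k * (2 - real t) - b * (2 - real s) = 0 \<Longrightarrow>
      a * b * (real s - 2) * (real t - 2) * ((real s - real t) * (real s + real t - 1)) = 0"
    "a * k * real t - b * real s = 0 \<Longrightarrow>
      a * b * real s * real t * ((real s - real t) * (real s + real t - 3)) = 0"
    using k unfolding berwald_coeff_def by algebra+
  ultimately show "a * k * (2 - real t) - b * (2 - real s) \<noteq> 0" "a * k * real t - b * real s \<noteq> 0"
    by auto
qed

lemma ratio_obstructions_vanish_imp:
  assumes "x \<noteq> 0" "y \<noteq> 0"
    and "berwald_coeff a t \<noteq> 0" "berwald_coeff b s \<noteq> 0" "s \<noteq> t"
    and k: "k * berwald_coeff a t = berwald_coeff b s"
    and "obstruction a b s t (ratio_monom k s t) 1 x y = 0"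
    and "obstruction a b s t (ratio_monom k s t) 2 x y = 0"
  shows "x * monom_val (ratio_monom k s t) x y + y = 0"
proof -
  define Q where "Q = x * x ^ t * y ^ s / (y * x ^ s * y ^ t)"
  note nondegenerate = ratio_coeffs_nondegenerate[OF assms(3-5) k]
  have "(1 - real s) + k * real t * Q = 0" "(2 - real s) + k * (real t - 1) * Q = 0"
    using assms(1,2,7,8) nondegenerate
    unfolding obstruction_1_ratio[OF assms(1,2)] obstruction_2_ratio[OF assms(1,2)] Q_def[symmetric]
    by simp_all
  then have "k * Q = 1"
    by (simp add: algebra_simps)
  then show ?thesis
    unfolding euler_ratio[OF assms(1,2)] Q_def[symmetric] by simp
qed

context landsberg_energy
begin

lemma ratio_relation:
  assumes "berwald_coeff a t \<noteq> 0"
  shows "\<forall>r\<in>U. pd (Yd 1) E r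
    = monom_at (ratio_monom (berwald_coeff b s / berwald_coeff a t) s t) r * pd (Yd 2) E r"
proof
  fix r assume r: "r \<in> U"
  let ?c\<^sub>t = "berwald_coeff a t" and ?c\<^sub>s = "berwald_coeff b s"
  let ?\<rho> = "monom_at (ratio_monom (?c\<^sub>s / ?c\<^sub>t) s t) r"
    and ?\<mu>\<^sub>t = "monom_at (?c\<^sub>t, 2 - int t, int t - 3) r" and ?\<mu>\<^sub>s = "monom_at (?c\<^sub>s, 2 - int s, int s - 3) r"
  have "yc 1 r \<noteq> 0" "yc 2 r \<noteq> 0"
    using in_Omega[OF r] by (auto simp: Omega_def)
  then have "?\<rho> * ?\<mu>\<^sub>t = - ?\<mu>\<^sub>s"
    using assms unfolding monom_at_def ratio_monom_def
    by (simp add: power_int_diff power_int_add power_int_minus)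
  then have "?\<mu>\<^sub>t * (pd (Yd 1) E r - ?\<rho> * pd (Yd 2) E r) = 0"
    using landsberg_relation[OF r] by algebra
  moreover have "?\<mu>\<^sub>t \<noteq> 0"
    using in_Omega[OF r] assms by (simp add: monom_at_eq_0_iff)
  ultimately show "pd (Yd 1) E r = ?\<rho> * pd (Yd 2) E r"
    by simp
qed

lemma obstruction_vanishes:
  assumes ratio: "\<forall>r\<in>U. pd (Yd 1) E r = monom_at R r * pd (Yd 2) E r"
    and p: "p \<in> U" and i: "i \<in> {1,2}"
  shows "obstruction a b s t R i (yc 1 p) (yc 2 p) * pd (Yd 2) E p = 0"
proof -
  have ratio_x: "pd (Xd i) (pd (Yd 1) E) p = monom_at R p * pd (Xd i) (pd (Yd 2) E) p"
    by (rule differentiate[OF p ratio, where v = "Xd i"], (rule has_pd_rules p in_Omega[OF p])+) simp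
  have ratio_y: "pd (Yd k) (pd (Yd 1) E) p
      = monom_at (monom_dy k R) p * pd (Yd 2) E p + monom_at R p * pd (Yd k) (pd (Yd 2) E) p" for k
    by (rule differentiate[OF p ratio, where v = "Yd k"], (rule has_pd_rules p in_Omega[OF p])+) simp
  have horizontal: "\<forall>r\<in>U. pd (Xd i) E r = conn 1 i r * pd (Yd 1) E r + conn 2 i r * pd (Yd 2) E r"
    using horizontal_E i by blast
  have horizontal_y: "pd (Yd j) (pd (Xd i) E) p
      = conn_dy j 1 i p * pd (Yd 1) E p + conn 1 i p * pd (Yd j) (pd (Yd 1) E) p
      + (conn_dy j 2 i p * pd (Yd 2) E p + conn 2 i p * pd (Yd j) (pd (Yd 2) E) p)" for j
    by (rule differentiate[OF p horizontal, where v = "Yd j"], (rule has_pd_rules p in_Omega[OF p])+) simp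
  show ?thesis
    unfolding obstruction_def monom_at_def[symmetric]
    using horizontal_y[of 1] horizontal_y[of 2] ratio_x ratio_y[of 1] ratio_y[of 2] ratio[rule_format, OF p]
      pd_E_commute[OF p Yd_in_Basis Xd_in_Basis, of 1 i] pd_E_commute[OF p Yd_in_Basis Xd_in_Basis, of 2 i]
      pd_E_commute[OF p Yd_in_Basis Yd_in_Basis, of 1 2]
    by algebra
qed

lemma ratio_case_impossible:
  assumes p: "p \<in> U" and "berwald_coeff a t \<noteq> 0" "berwald_coeff b s \<noteq> 0" "s \<noteq> t"
  shows False
proof -
  define k where "k = berwald_coeff b s / berwald_coeff a t"
  have k: "k * berwald_coeff a t = berwald_coeff b s"
    using assms(2) by (simp add: k_def)
  note ratio = ratio_relation[OF assms(2), folded k_def]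
  have y: "yc 1 p \<noteq> 0" "yc 2 p \<noteq> 0"
    using in_Omega[OF p] by (auto simp: Omega_def)
  have euler: "2 * E p = (yc 1 p * monom_at (ratio_monom k s t) p + yc 2 p) * pd (Yd 2) E p"
    using euler_E ratio p by (simp add: algebra_simps)
  then have "pd (Yd 2) E p \<noteq> 0"
    using E_pos[OF p] by auto
  then have "obstruction a b s t (ratio_monom k s t) i (yc 1 p) (yc 2 p) = 0" if "i \<in> {1,2}" for i
    using obstruction_vanishes[OF ratio p that] by simp
  then have "yc 1 p * monom_at (ratio_monom k s t) p + yc 2 p = 0"
    unfolding monom_at_def using ratio_obstructions_vanish_imp[OF y assms(2-4) k] by simp
  with euler show False
    using E_pos[OF p] by simp
qed

theorem Berwald_vanishes:
  assumes p: "p \<in> U"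
  shows "Berwald (fsp a b s t) i j k l p = 0"
proof (rule ccontr)
  assume "Berwald (fsp a b s t) i j k l p \<noteq> 0"
  then have "(berwald_coeff a t, berwald_coeff b s) \<noteq> (0, 0)"
    using Berwald_eq_0_if_berwald_coeff_eq_0[OF _ _ in_Omega[OF p]] by auto
  then show False
    using proportional_case_impossible[OF p] ratio_case_impossible[OF p] by blast
qed

end

theorem mainTheorem15:
  fixes a b :: real and s t :: nat
  shows "\<not> (\<exists>(U :: pt set) (E :: pt \<Rightarrow> real).
            open U \<and> U \<subseteq> {p. yc 1 p \<noteq> 0 \<and> yc 2 p \<noteq> 0} \<and>
            (\<exists>p\<in>U. \<exists>i\<in>{1,2::nat}. \<exists>j\<in>{1,2::nat}. \<exists>k\<in>{1,2::nat}. \<exists>l\<in>{1,2::nat}.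
                Berwald (fsp a b s t) i j k l p \<noteq> 0) \<and>
            smooth_on U E \<and>
            cond_H U E \<and> cond_EL U (fsp a b s t) E \<and> cond_Ls U (fsp a b s t) E \<and>
            pos_def_g U E)"
  using landsberg_energy.Berwald_vanishes unfolding landsberg_energy_def Omega_def by blast

end
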